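(* Let $\mathcal T$ be a triangulated category, $X\in\mathcal T$ and $n\ge0$ such that $\operatorname{thick}^{n+1}(X)=\mathcal T$. Put $Y=X\oplus\Sigma^nX$. Then $\hom^p(Y)\subseteq\operatorname{thick}^p(Y)$ for all $p\ge0$. Consequently, if moreover every object of $\mathcal T$ is homologically finite, then $Y$ is a finitistic generator of $\mathcal T$.
   Context: $\Sigma$ denotes the suspension. With $\operatorname{add}\mathcal X$ the smallest full subcategory containing $\mathcal X$ closed under finite direct sums and direct summands, set $\operatorname{thick}^0(X)=\operatorname{add}\varnothing$, $\operatorname{thick}^1(X)=\operatorname{add}\{\Sigma^iX\mid i\in\mathbb Z\}$, and for $n>1$, $\operatorname{thick}^n(X)=\operatorname{add}\{\operatorname{cone}\varphi\mid\varphi\colon U\to V,\ U\in\operatorname{thick}^1(X),\ V\in\operatorname{thick}^{n-1}(X)\}$. For objects $X,Y$ and $n\ge0$, write $h(X,Y)\le n$ if for all $i,j\in\mathbb Z$: $\operatorname{Hom}(X,\Sigma^iY)\ne0\ne\operatorname{Hom}(X,\Sigma^jY)$ implies $|i-j|<n$; $\hom^n(X):=\{Z\mid h(X,Z)\le n\}$. $X$ is homologically finite if for every $Z$ there is $n$ with $h(X,Z)\le n$. $X$ is a finitistic generator if $X$ is homologically finite and $\hom^p(X)\subseteq\operatorname{thick}^p(X)$ for all $p\ge0$. *)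

theory Defs
  imports Main
begin

text \<open>A category given by a carrier of objects and arrows with source/target,
  additive structure on Hom-sets, a suspension functor and a class of
  distinguished triangles (X, Y, Z, u, v, w) meaning X -u-> Y -v-> Z -w-> Sigma X.\<close>

record ('o, 'm) tcat =
  Ob   :: "'o set"
  Ar   :: "'m set"
  src  :: "'m \<Rightarrow> 'o"
  tgt  :: "'m \<Rightarrow> 'o"
  comp :: "'m \<Rightarrow> 'm \<Rightarrow> 'm"   (* comp g f = g after f *)
  idm  :: "'o \<Rightarrow> 'm"
  plus :: "'m \<Rightarrow> 'm \<Rightarrow> 'm"
  neg  :: "'m \<Rightarrow> 'm"
  zer  :: "'o \<Rightarrow> 'o \<Rightarrow> 'm"
  Sig  :: "'o \<Rightarrow> 'o"
  SigA :: "'m \<Rightarrow> 'm"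
  Tri  :: "('o \<times> 'o \<times> 'o \<times> 'm \<times> 'm \<times> 'm) set"

definition Hom :: "('o,'m) tcat \<Rightarrow> 'o \<Rightarrow> 'o \<Rightarrow> 'm set" where
  "Hom C x y = {f \<in> Ar C. src C f = x \<and> tgt C f = y}"

definition category :: "('o,'m) tcat \<Rightarrow> bool" where
  "category C \<longleftrightarrow>
     (\<forall>f\<in>Ar C. src C f \<in> Ob C \<and> tgt C f \<in> Ob C) \<and>
     (\<forall>x\<in>Ob C. idm C x \<in> Hom C x x) \<and>
     (\<forall>x y z f g. f \<in> Hom C x y \<longrightarrow> g \<in> Hom C y z \<longrightarrow> comp C g f \<in> Hom C x z) \<and>
     (\<forall>x y f. f \<in> Hom C x y \<longrightarrow> comp C f (idm C x) = f \<and> comp C (idm C y) f = f) \<and>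
     (\<forall>w x y z f g h. f \<in> Hom C w x \<longrightarrow> g \<in> Hom C x y \<longrightarrow> h \<in> Hom C y z \<longrightarrow>
        comp C h (comp C g f) = comp C (comp C h g) f)"

definition is_zero :: "('o,'m) tcat \<Rightarrow> 'o \<Rightarrow> bool" where
  "is_zero C z \<longleftrightarrow> z \<in> Ob C \<and>
     (\<forall>x\<in>Ob C. Hom C z x = {zer C z x} \<and> Hom C x z = {zer C x z})"

definition biprod :: "('o,'m) tcat \<Rightarrow> 'o \<Rightarrow> 'o \<Rightarrow> 'o \<Rightarrow> 'm \<Rightarrow> 'm \<Rightarrow> 'm \<Rightarrow> 'm \<Rightarrow> bool" where
  "biprod C A B S i1 i2 p1 p2 \<longleftrightarrow>
     A \<in> Ob C \<and> B \<in> Ob C \<and> S \<in> Ob C \<and>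
     i1 \<in> Hom C A S \<and> i2 \<in> Hom C B S \<and> p1 \<in> Hom C S A \<and> p2 \<in> Hom C S B \<and>
     comp C p1 i1 = idm C A \<and> comp C p2 i2 = idm C B \<and>
     comp C p2 i1 = zer C A B \<and> comp C p1 i2 = zer C B A \<and>
     plus C (comp C i1 p1) (comp C i2 p2) = idm C S"

definition additive :: "('o,'m) tcat \<Rightarrow> bool" where
  "additive C \<longleftrightarrow> category C \<and>
     (\<forall>x\<in>Ob C. \<forall>y\<in>Ob C.
        zer C x y \<in> Hom C x y \<and>
        (\<forall>f\<in>Hom C x y. \<forall>g\<in>Hom C x y. plus C f g \<in> Hom C x y) \<and>
        (\<forall>f\<in>Hom C x y. neg C f \<in> Hom C x y) \<and>
        (\<forall>f\<in>Hom C x y. \<forall>g\<in>Hom C x y. \<forall>h\<in>Hom C x y.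
           plus C (plus C f g) h = plus C f (plus C g h)) \<and>
        (\<forall>f\<in>Hom C x y. \<forall>g\<in>Hom C x y. plus C f g = plus C g f) \<and>
        (\<forall>f\<in>Hom C x y. plus C f (zer C x y) = f) \<and>
        (\<forall>f\<in>Hom C x y. plus C f (neg C f) = zer C x y)) \<and>
     (\<forall>x y z f g h. f \<in> Hom C x y \<longrightarrow> g \<in> Hom C x y \<longrightarrow> h \<in> Hom C y z \<longrightarrow>
        comp C h (plus C f g) = plus C (comp C h f) (comp C h g)) \<and>
     (\<forall>x y z f g h. f \<in> Hom C y z \<longrightarrow> g \<in> Hom C y z \<longrightarrow> h \<in> Hom C x y \<longrightarrow>
        comp C (plus C f g) h = plus C (comp C f h) (comp C g h)) \<and>
     (\<exists>z. is_zero C z) \<and>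
     (\<forall>A\<in>Ob C. \<forall>B\<in>Ob C. \<exists>S i1 i2 p1 p2. biprod C A B S i1 i2 p1 p2)"

definition iso :: "('o,'m) tcat \<Rightarrow> 'o \<Rightarrow> 'o \<Rightarrow> bool" where
  "iso C x y \<longleftrightarrow> (\<exists>f\<in>Hom C x y. \<exists>g\<in>Hom C y x.
      comp C g f = idm C x \<and> comp C f g = idm C y)"

definition susp_equiv :: "('o,'m) tcat \<Rightarrow> bool" where
  "susp_equiv C \<longleftrightarrow>
     (\<forall>x\<in>Ob C. Sig C x \<in> Ob C) \<and>
     (\<forall>x y f. f \<in> Hom C x y \<longrightarrow> SigA C f \<in> Hom C (Sig C x) (Sig C y)) \<and>
     (\<forall>x\<in>Ob C. SigA C (idm C x) = idm C (Sig C x)) \<and>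
     (\<forall>x y z f g. f \<in> Hom C x y \<longrightarrow> g \<in> Hom C y z \<longrightarrow>
        SigA C (comp C g f) = comp C (SigA C g) (SigA C f)) \<and>
     (\<forall>x y f g. f \<in> Hom C x y \<longrightarrow> g \<in> Hom C x y \<longrightarrow>
        SigA C (plus C f g) = plus C (SigA C f) (SigA C g)) \<and>
     (\<forall>x\<in>Ob C. \<forall>y\<in>Ob C. bij_betw (SigA C) (Hom C x y) (Hom C (Sig C x) (Sig C y))) \<and>
     (\<forall>y\<in>Ob C. \<exists>x\<in>Ob C. iso C (Sig C x) y)"

definition is_triangle :: "('o,'m) tcat \<Rightarrow> ('o \<times> 'o \<times> 'o \<times> 'm \<times> 'm \<times> 'm) \<Rightarrow> bool" where
  "is_triangle C T \<longleftrightarrow> (case T of (X, Y, Z, u, v, w) \<Rightarrow>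
      u \<in> Hom C X Y \<and> v \<in> Hom C Y Z \<and> w \<in> Hom C Z (Sig C X))"

definition is_iso_arr :: "('o,'m) tcat \<Rightarrow> 'm \<Rightarrow> bool" where
  "is_iso_arr C f \<longleftrightarrow> f \<in> Ar C \<and> (\<exists>g\<in>Hom C (tgt C f) (src C f).
      comp C g f = idm C (src C f) \<and> comp C f g = idm C (tgt C f))"

definition triangulated :: "('o,'m) tcat \<Rightarrow> bool" where
  "triangulated C \<longleftrightarrow> additive C \<and> susp_equiv C \<and>
     \<comment> \<open>distinguished triangles are triangles\<close>
     (\<forall>T\<in>Tri C. is_triangle C T) \<and>
     \<comment> \<open>TR1: closed under isomorphism of triangles\<close>
     (\<forall>X Y Z u v w X' Y' Z' u' v' w' a b c.
        (X, Y, Z, u, v, w) \<in> Tri C \<longrightarrow> is_triangle C (X', Y', Z', u', v', w') \<longrightarrow>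
        a \<in> Hom C X X' \<longrightarrow> b \<in> Hom C Y Y' \<longrightarrow> c \<in> Hom C Z Z' \<longrightarrow>
        is_iso_arr C a \<longrightarrow> is_iso_arr C b \<longrightarrow> is_iso_arr C c \<longrightarrow>
        comp C b u = comp C u' a \<longrightarrow> comp C c v = comp C v' b \<longrightarrow>
        comp C (SigA C a) w = comp C w' c \<longrightarrow>
        (X', Y', Z', u', v', w') \<in> Tri C) \<and>
     \<comment> \<open>TR1: X -id-> X -> 0 -> Sigma X is distinguished\<close>
     (\<forall>X\<in>Ob C. \<forall>z. is_zero C z \<longrightarrow>
        (X, X, z, idm C X, zer C X z, zer C z (Sig C X)) \<in> Tri C) \<and>
     \<comment> \<open>TR1: every morphism extends to a distinguished triangle\<close>
     (\<forall>X Y u. u \<in> Hom C X Y \<longrightarrow> (\<exists>Z v w. (X, Y, Z, u, v, w) \<in> Tri C)) \<and>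
     \<comment> \<open>TR2: rotation\<close>
     (\<forall>X Y Z u v w. (X, Y, Z, u, v, w) \<in> Tri C \<longrightarrow>
        (Y, Z, Sig C X, v, w, neg C (SigA C u)) \<in> Tri C) \<and>
     \<comment> \<open>TR3: completion of morphisms of triangles\<close>
     (\<forall>X Y Z u v w X' Y' Z' u' v' w' a b.
        (X, Y, Z, u, v, w) \<in> Tri C \<longrightarrow> (X', Y', Z', u', v', w') \<in> Tri C \<longrightarrow>
        a \<in> Hom C X X' \<longrightarrow> b \<in> Hom C Y Y' \<longrightarrow> comp C b u = comp C u' a \<longrightarrow>
        (\<exists>c\<in>Hom C Z Z'. comp C c v = comp C v' b \<and> comp C (SigA C a) w = comp C w' c)) \<and>
     \<comment> \<open>TR4: octahedral axiom\<close>
     (\<forall>X Y Z u v Z' i i' X' j j' Y' k k'.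
        u \<in> Hom C X Y \<longrightarrow> v \<in> Hom C Y Z \<longrightarrow>
        (X, Y, Z', u, i, i') \<in> Tri C \<longrightarrow>
        (Y, Z, X', v, j, j') \<in> Tri C \<longrightarrow>
        (X, Z, Y', comp C v u, k, k') \<in> Tri C \<longrightarrow>
        (\<exists>f\<in>Hom C Z' Y'. \<exists>g\<in>Hom C Y' X'.
           (Z', Y', X', f, g, comp C (SigA C i) j') \<in> Tri C \<and>
           comp C f i = comp C k v \<and> comp C k' f = i' \<and>
           comp C g k = j \<and> comp C j' g = comp C (SigA C u) k'))"

text \<open>Objects isomorphic to Sigma^i Y (i an integer); for negative i,
  Sigma^i Y is the class of Z with Sigma^(-i) Z isomorphic to Y.\<close>
definition shifts :: "('o,'m) tcat \<Rightarrow> int \<Rightarrow> 'o \<Rightarrow> 'o set" where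
  "shifts C i Y = (if 0 \<le> i then {Z \<in> Ob C. iso C Z ((Sig C ^^ nat i) Y)}
                   else {Z \<in> Ob C. iso C ((Sig C ^^ nat (- i)) Z) Y})"

definition hom_nz :: "('o,'m) tcat \<Rightarrow> 'o \<Rightarrow> int \<Rightarrow> 'o \<Rightarrow> bool" where
  "hom_nz C X i Y \<longleftrightarrow> (\<exists>Z\<in>shifts C i Y. \<exists>f\<in>Hom C X Z. f \<noteq> zer C X Z)"

inductive_set addc :: "('o,'m) tcat \<Rightarrow> 'o set \<Rightarrow> 'o set" for C Xs where
  zero: "is_zero C z \<Longrightarrow> z \<in> addc C Xs"
| base: "x \<in> Xs \<Longrightarrow> x \<in> Ob C \<Longrightarrow> x \<in> addc C Xs"
| sum: "A \<in> addc C Xs \<Longrightarrow> B \<in> addc C Xs \<Longrightarrow> biprod C A B S i1 i2 p1 p2 \<Longrightarrow> S \<in> addc C Xs"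
| summand: "S \<in> addc C Xs \<Longrightarrow> biprod C A B S i1 i2 p1 p2 \<Longrightarrow> A \<in> addc C Xs"

definition cones :: "('o,'m) tcat \<Rightarrow> 'o \<Rightarrow> 'o \<Rightarrow> 'o set" where
  "cones C U V = {Z. \<exists>phi\<in>Hom C U V. \<exists>v w. (U, V, Z, phi, v, w) \<in> Tri C}"

fun thick :: "('o,'m) tcat \<Rightarrow> 'o \<Rightarrow> nat \<Rightarrow> 'o set" where
  "thick C X 0 = addc C {}"
| "thick C X (Suc 0) = addc C (\<Union>i. shifts C i X)"
| "thick C X (Suc (Suc n)) = addc C {Z. \<exists>U V. U \<in> thick C X (Suc 0) \<and>
       V \<in> thick C X (Suc n) \<and> Z \<in> cones C U V}"

definition hle :: "('o,'m) tcat \<Rightarrow> 'o \<Rightarrow> 'o \<Rightarrow> nat \<Rightarrow> bool" where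
  "hle C X Y n \<longleftrightarrow> (\<forall>i j. hom_nz C X i Y \<and> hom_nz C X j Y \<longrightarrow> \<bar>i - j\<bar> < int n)"

definition homset :: "('o,'m) tcat \<Rightarrow> 'o \<Rightarrow> nat \<Rightarrow> 'o set" where
  "homset C X n = {Z \<in> Ob C. hle C X Z n}"

definition homologically_finite :: "('o,'m) tcat \<Rightarrow> 'o \<Rightarrow> bool" where
  "homologically_finite C X \<longleftrightarrow> (\<forall>Z\<in>Ob C. \<exists>n. hle C X Z n)"

definition finitistic_generator :: "('o,'m) tcat \<Rightarrow> 'o \<Rightarrow> bool" where
  "finitistic_generator C X \<longleftrightarrow> homologically_finite C X \<and>
     (\<forall>p. homset C X p \<subseteq> thick C X p)"

end

theory Submission
  imports Defs
begin

text \<open>Every shift of X is a direct summand of the corresponding shift of Y, so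
  thick^k(X) \<subseteq> thick^k(Y) for all k. Now let h(Y, Z) \<le> p. The objects W with
  Hom(W, \<Sigma>^i Z) = 0 for all i are closed under shifts, sums, summands and cones; so if
  X is among them, so is every object of thick^(n+1)(X), in particular Z itself, and Z = 0.
  Otherwise Hom(X, \<Sigma>^i Z) \<noteq> 0 for some i, and then both Hom(Y, \<Sigma>^i Z) and
  Hom(Y, \<Sigma>^(i+n) Z) are nonzero, which forces n < p; hence
  Z \<in> thick^(n+1)(X) \<subseteq> thick^(n+1)(Y) \<subseteq> thick^p(Y).\<close>

section \<open>Additive categories\<close>

locale cat =
  fixes C :: "('o, 'm) tcat"
  assumes category: "category C"
begin

lemma Hom_Ob: "f \<in> Hom C x y \<Longrightarrow> x \<in> Ob C \<and> y \<in> Ob C"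
  using category unfolding category_def Hom_def by auto

lemma comp_Hom: "f \<in> Hom C x y \<Longrightarrow> g \<in> Hom C y z \<Longrightarrow> comp C g f \<in> Hom C x z"
  using category unfolding category_def by blast

lemma id_Hom: "x \<in> Ob C \<Longrightarrow> idm C x \<in> Hom C x x"
  using category unfolding category_def by blast

lemma comp_id_right: "f \<in> Hom C x y \<Longrightarrow> comp C f (idm C x) = f"
  using category unfolding category_def by blast

lemma comp_id_left: "f \<in> Hom C x y \<Longrightarrow> comp C (idm C y) f = f"
  using category unfolding category_def by blast

lemma comp_assoc: "f \<in> Hom C w x \<Longrightarrow> g \<in> Hom C x y \<Longrightarrow> h \<in> Hom C y z \<Longrightarrow>
    comp C h (comp C g f) = comp C (comp C h g) f"
  using category unfolding category_def by blast

lemma iso_refl: "x \<in> Ob C \<Longrightarrow> iso C x x"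
  unfolding iso_def using id_Hom comp_id_right by blast

lemma iso_trans:
  assumes "iso C x y" and "iso C y z"
  shows "iso C x z"
proof -
  obtain f g where f: "f \<in> Hom C x y" and g: "g \<in> Hom C y x"
    and gf: "comp C g f = idm C x" and fg: "comp C f g = idm C y"
    using assms(1) unfolding iso_def by blast
  obtain f' g' where f': "f' \<in> Hom C y z" and g': "g' \<in> Hom C z y"
    and gf': "comp C g' f' = idm C y" and fg': "comp C f' g' = idm C z"
    using assms(2) unfolding iso_def by blast
  have "comp C (comp C g g') (comp C f' f) = comp C g (comp C g' (comp C f' f))"
    using comp_assoc[OF comp_Hom[OF f f'] g' g] by simp
  also have "comp C g' (comp C f' f) = f"
    using comp_assoc[OF f f' g'] gf' comp_id_left[OF f] by simp
  finally have left: "comp C (comp C g g') (comp C f' f) = idm C x"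
    using gf by simp
  have "comp C (comp C f' f) (comp C g g') = comp C f' (comp C f (comp C g g'))"
    using comp_assoc[OF comp_Hom[OF g' g] f f'] by simp
  also have "comp C f (comp C g g') = g'"
    using comp_assoc[OF g' g f] fg comp_id_left[OF g'] by simp
  finally have right: "comp C (comp C f' f) (comp C g g') = idm C z"
    using fg' by simp
  show ?thesis
    unfolding iso_def using left right comp_Hom f f' g g' by blast
qed

lemma is_iso_arrI:
  "f \<in> Hom C x y \<Longrightarrow> g \<in> Hom C y x \<Longrightarrow> comp C g f = idm C x \<Longrightarrow> comp C f g = idm C y
    \<Longrightarrow> is_iso_arr C f"
  unfolding is_iso_arr_def Hom_def by auto

end

locale additive_cat =
  fixes C :: "('o, 'm) tcat"
  assumes additive: "additive C"

sublocale additive_cat \<subseteq> cat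
  using additive unfolding additive_def by unfold_locales simp

context additive_cat
begin

lemma zer_Hom: "x \<in> Ob C \<Longrightarrow> y \<in> Ob C \<Longrightarrow> zer C x y \<in> Hom C x y"
  using additive unfolding additive_def by meson

lemma plus_Hom: "f \<in> Hom C x y \<Longrightarrow> g \<in> Hom C x y \<Longrightarrow> plus C f g \<in> Hom C x y"
  using additive Hom_Ob unfolding additive_def by meson

lemma neg_Hom: "f \<in> Hom C x y \<Longrightarrow> neg C f \<in> Hom C x y"
  using additive Hom_Ob unfolding additive_def by meson

lemma plus_assoc: "f \<in> Hom C x y \<Longrightarrow> g \<in> Hom C x y \<Longrightarrow> h \<in> Hom C x y \<Longrightarrow>
    plus C (plus C f g) h = plus C f (plus C g h)"
  using additive Hom_Ob unfolding additive_def by meson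

lemma plus_commute: "f \<in> Hom C x y \<Longrightarrow> g \<in> Hom C x y \<Longrightarrow> plus C f g = plus C g f"
  using additive Hom_Ob unfolding additive_def by meson

lemma plus_zer_right: "f \<in> Hom C x y \<Longrightarrow> plus C f (zer C x y) = f"
  using additive Hom_Ob unfolding additive_def by meson

lemma plus_neg_right: "f \<in> Hom C x y \<Longrightarrow> plus C f (neg C f) = zer C x y"
  using additive Hom_Ob unfolding additive_def by meson

lemma comp_plus_left: "f \<in> Hom C x y \<Longrightarrow> g \<in> Hom C x y \<Longrightarrow> h \<in> Hom C y z \<Longrightarrow>
    comp C h (plus C f g) = plus C (comp C h f) (comp C h g)"
  using additive unfolding additive_def by meson

lemma comp_plus_right: "f \<in> Hom C y z \<Longrightarrow> g \<in> Hom C y z \<Longrightarrow> h \<in> Hom C x y \<Longrightarrow>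
    comp C (plus C f g) h = plus C (comp C f h) (comp C g h)"
  using additive unfolding additive_def by meson

lemma ex_zero: "\<exists>z. is_zero C z"
  using additive unfolding additive_def by meson

lemma ex_biprod: "A \<in> Ob C \<Longrightarrow> B \<in> Ob C \<Longrightarrow> \<exists>S i1 i2 p1 p2. biprod C A B S i1 i2 p1 p2"
  using additive unfolding additive_def by meson

lemma zero_Ob: "is_zero C z \<Longrightarrow> z \<in> Ob C"
  unfolding is_zero_def by blast

lemma plus_zer_left: "f \<in> Hom C x y \<Longrightarrow> plus C (zer C x y) f = f"
  by (metis Hom_Ob plus_commute plus_zer_right zer_Hom)

lemma eq_zer_if_plus_self:
  assumes a: "a \<in> Hom C x y" and aa: "plus C a a = a"
  shows "a = zer C x y"
proof -
  have "zer C x y = plus C (plus C a a) (neg C a)"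
    using plus_neg_right a aa by simp
  also have "\<dots> = a"
    using plus_assoc plus_neg_right plus_zer_right a neg_Hom by simp
  finally show ?thesis by simp
qed

lemma neg_unique:
  assumes a: "a \<in> Hom C x y" and b: "b \<in> Hom C x y" and ab: "plus C a b = zer C x y"
  shows "b = neg C a"
proof -
  have na: "neg C a \<in> Hom C x y" using neg_Hom a .
  have "b = plus C b (plus C a (neg C a))"
    using plus_neg_right plus_zer_right a b by simp
  also have "\<dots> = plus C (plus C a b) (neg C a)"
    using plus_assoc plus_commute a b na by metis
  also have "\<dots> = neg C a"
    using ab plus_zer_left na by simp
  finally show ?thesis .
qed

lemma comp_zer_right:
  assumes f: "f \<in> Hom C y z" and x: "x \<in> Ob C"
  shows "comp C f (zer C x y) = zer C x z"
proof -
  have zz: "zer C x y \<in> Hom C x y" using zer_Hom x Hom_Ob f by blast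
  have "plus C (comp C f (zer C x y)) (comp C f (zer C x y)) = comp C f (zer C x y)"
    using comp_plus_left[OF zz zz f] plus_zer_right zz by simp
  thus ?thesis using eq_zer_if_plus_self comp_Hom zz f by blast
qed

lemma comp_zer_left:
  assumes f: "f \<in> Hom C x y" and z: "z \<in> Ob C"
  shows "comp C (zer C y z) f = zer C x z"
proof -
  have zz: "zer C y z \<in> Hom C y z" using zer_Hom z Hom_Ob f by blast
  have "plus C (comp C (zer C y z) f) (comp C (zer C y z) f) = comp C (zer C y z) f"
    using comp_plus_right[OF zz zz f] plus_zer_right zz by simp
  thus ?thesis using eq_zer_if_plus_self comp_Hom zz f by blast
qed

lemma neg_zer: "x \<in> Ob C \<Longrightarrow> y \<in> Ob C \<Longrightarrow> neg C (zer C x y) = zer C x y"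
  by (metis neg_unique plus_zer_right zer_Hom)

lemma comp_neg_right:
  assumes h: "h \<in> Hom C y z" and g: "g \<in> Hom C x y"
  shows "comp C h (neg C g) = neg C (comp C h g)"
proof -
  have "plus C (comp C h g) (comp C h (neg C g)) = comp C h (zer C x y)"
    using comp_plus_left[OF g neg_Hom[OF g] h] plus_neg_right[OF g] by simp
  also have "\<dots> = zer C x z"
    using comp_zer_right h Hom_Ob g by blast
  finally show ?thesis using neg_unique comp_Hom h g neg_Hom by blast
qed

lemma comp_neg_left:
  assumes h: "h \<in> Hom C y z" and g: "g \<in> Hom C x y"
  shows "comp C (neg C h) g = neg C (comp C h g)"
proof -
  have "plus C (comp C h g) (comp C (neg C h) g) = comp C (zer C y z) g"
    using comp_plus_right[OF h neg_Hom[OF h] g] plus_neg_right[OF h] by simp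
  also have "\<dots> = zer C x z"
    using comp_zer_left g Hom_Ob h by blast
  finally show ?thesis using neg_unique comp_Hom h g neg_Hom by blast
qed

lemma neg_neg:
  assumes f: "f \<in> Hom C x y"
  shows "neg C (neg C f) = f"
proof -
  have "plus C (neg C f) f = zer C x y"
    using plus_commute plus_neg_right f neg_Hom by metis
  thus ?thesis using neg_unique neg_Hom f by metis
qed

lemma is_iso_arr_neg:
  assumes f: "f \<in> Hom C x y" and g: "g \<in> Hom C y x"
    and gf: "comp C g f = idm C x" and fg: "comp C f g = idm C y"
  shows "is_iso_arr C (neg C f)"
proof (rule is_iso_arrI)
  show nf: "neg C f \<in> Hom C x y" and ng: "neg C g \<in> Hom C y x" using neg_Hom f g by auto
  show "comp C (neg C g) (neg C f) = idm C x"
    using comp_neg_left[OF g nf] comp_neg_right[OF g f] neg_neg[OF comp_Hom[OF f g]] gf by simp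
  show "comp C (neg C f) (neg C g) = idm C y"
    using comp_neg_left[OF f ng] comp_neg_right[OF f g] neg_neg[OF comp_Hom[OF g f]] fg by simp
qed

end

lemma shifts_Ob: "Z' \<in> shifts C i Z \<Longrightarrow> Z' \<in> Ob C"
  unfolding shifts_def by (auto split: if_splits)

context additive_cat
begin

lemma biprod_Ob: "biprod C A B W i1 i2 p1 p2 \<Longrightarrow> A \<in> Ob C \<and> B \<in> Ob C \<and> W \<in> Ob C"
  unfolding biprod_def by blast

lemma biprod_swap: "biprod C A B W i1 i2 p1 p2 \<Longrightarrow> biprod C B A W i2 i1 p2 p1"
  unfolding biprod_def using plus_commute comp_Hom by metis

lemma biprod_replace_fst:
  assumes b: "biprod C A B W i1 i2 p1 p2" and iso: "iso C A' A"
  shows "\<exists>j1 q1. biprod C A' B W j1 i2 q1 p2"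
proof -
  obtain a a' where a: "a \<in> Hom C A' A" and a': "a' \<in> Hom C A A'"
    and a'a: "comp C a' a = idm C A'" and aa': "comp C a a' = idm C A"
    using iso unfolding iso_def by blast
  from b have i1: "i1 \<in> Hom C A W" and i2: "i2 \<in> Hom C B W"
    and p1: "p1 \<in> Hom C W A" and p2: "p2 \<in> Hom C W B"
    and p1i1: "comp C p1 i1 = idm C A" and p2i1: "comp C p2 i1 = zer C A B"
    and p1i2: "comp C p1 i2 = zer C B A"
    and split: "plus C (comp C i1 p1) (comp C i2 p2) = idm C W"
    unfolding biprod_def by auto
  have "comp C (comp C a' p1) (comp C i1 a) = comp C a' (comp C p1 (comp C i1 a))"
    using comp_assoc[OF comp_Hom[OF a i1] p1 a'] by simp
  also have "comp C p1 (comp C i1 a) = a"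
    using comp_assoc[OF a i1 p1] p1i1 comp_id_left[OF a] by simp
  finally have 1: "comp C (comp C a' p1) (comp C i1 a) = idm C A'"
    using a'a by simp
  have 2: "comp C p2 (comp C i1 a) = zer C A' B"
    using comp_assoc[OF a i1 p2] p2i1 comp_zer_left[OF a] Hom_Ob p2 by auto
  have 3: "comp C (comp C a' p1) i2 = zer C B A'"
    using comp_assoc[OF i2 p1 a'] p1i2 comp_zer_right[OF a'] Hom_Ob i2 by auto
  have "comp C (comp C i1 a) (comp C a' p1) = comp C i1 (comp C a (comp C a' p1))"
    using comp_assoc[OF comp_Hom[OF p1 a'] a i1] by simp
  also have "comp C a (comp C a' p1) = p1"
    using comp_assoc[OF p1 a' a] aa' comp_id_left[OF p1] by simp
  finally have 4: "plus C (comp C (comp C i1 a) (comp C a' p1)) (comp C i2 p2) = idm C W"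
    using split by simp
  have "biprod C A' B W (comp C i1 a) i2 (comp C a' p1) p2"
    using b 1 2 3 4 Hom_Ob a comp_Hom a' i1 p1 unfolding biprod_def by auto
  thus ?thesis by blast
qed

lemma biprod_replace_snd:
  assumes "biprod C A B W i1 i2 p1 p2" and "iso C B' B"
  shows "\<exists>j2 q2. biprod C A B' W i1 j2 p1 q2"
  using biprod_replace_fst[OF biprod_swap[OF assms(1)] assms(2)] biprod_swap by blast

lemma biprod_comparison_comp_inj:
  assumes b: "biprod C A B W i1 i2 p1 p2" and b': "biprod C A B W' j1 j2 q1 q2"
  shows "comp C (plus C (comp C i1 q1) (comp C i2 q2)) j1 = i1"
proof -
  from b have i1: "i1 \<in> Hom C A W" and i2: "i2 \<in> Hom C B W"
    unfolding biprod_def by auto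
  from b' have j1: "j1 \<in> Hom C A W'" and q1: "q1 \<in> Hom C W' A" and q2: "q2 \<in> Hom C W' B"
    and q1j1: "comp C q1 j1 = idm C A" and q2j1: "comp C q2 j1 = zer C A B"
    unfolding biprod_def by auto
  have "comp C (plus C (comp C i1 q1) (comp C i2 q2)) j1
      = plus C (comp C i1 (comp C q1 j1)) (comp C i2 (comp C q2 j1))"
    using comp_plus_right[OF comp_Hom[OF q1 i1] comp_Hom[OF q2 i2] j1]
      comp_assoc[OF j1 q1 i1] comp_assoc[OF j1 q2 i2] by simp
  also have "\<dots> = i1"
    using q1j1 q2j1 comp_id_right[OF i1] comp_zer_right[OF i2] plus_zer_right[OF i1] Hom_Ob i1
    by simp
  finally show ?thesis .
qed

lemma biprod_unique_iso:
  assumes b: "biprod C A B W i1 i2 p1 p2" and b': "biprod C A B W' j1 j2 q1 q2"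
  shows "iso C W W'"
proof -
  from b have i1: "i1 \<in> Hom C A W" and i2: "i2 \<in> Hom C B W"
    and p1: "p1 \<in> Hom C W A" and p2: "p2 \<in> Hom C W B"
    and split: "plus C (comp C i1 p1) (comp C i2 p2) = idm C W"
    unfolding biprod_def by auto
  from b' have j1: "j1 \<in> Hom C A W'" and j2: "j2 \<in> Hom C B W'"
    and q1: "q1 \<in> Hom C W' A" and q2: "q2 \<in> Hom C W' B"
    and split': "plus C (comp C j1 q1) (comp C j2 q2) = idm C W'"
    unfolding biprod_def by auto
  define \<phi> where "\<phi> = plus C (comp C j1 p1) (comp C j2 p2)"
  define \<psi> where "\<psi> = plus C (comp C i1 q1) (comp C i2 q2)"
  have \<phi>: "\<phi> \<in> Hom C W W'" unfolding \<phi>_def using plus_Hom comp_Hom i1 i2 p1 p2 j1 j2 by blast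
  have \<psi>: "\<psi> \<in> Hom C W' W" unfolding \<psi>_def using plus_Hom comp_Hom i1 i2 q1 q2 by blast
  have \<phi>_commute: "\<phi> = plus C (comp C j2 p2) (comp C j1 p1)"
    unfolding \<phi>_def using plus_commute comp_Hom p1 p2 j1 j2 by blast
  have \<psi>_commute: "\<psi> = plus C (comp C i2 q2) (comp C i1 q1)"
    unfolding \<psi>_def using plus_commute comp_Hom i1 i2 q1 q2 by blast
  have \<psi>j: "comp C \<psi> j1 = i1" "comp C \<psi> j2 = i2"
    using biprod_comparison_comp_inj[OF b b'] \<psi>_def
      biprod_comparison_comp_inj[OF biprod_swap[OF b] biprod_swap[OF b']] \<psi>_commute by simp_all
  have \<phi>i: "comp C \<phi> i1 = j1" "comp C \<phi> i2 = j2"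
    using biprod_comparison_comp_inj[OF b' b] \<phi>_def
      biprod_comparison_comp_inj[OF biprod_swap[OF b'] biprod_swap[OF b]] \<phi>_commute by simp_all
  have "comp C \<psi> \<phi> = plus C (comp C (comp C \<psi> j1) p1) (comp C (comp C \<psi> j2) p2)"
    unfolding \<phi>_def using comp_plus_left[OF comp_Hom[OF p1 j1] comp_Hom[OF p2 j2] \<psi>]
      comp_assoc[OF p1 j1 \<psi>] comp_assoc[OF p2 j2 \<psi>] by simp
  hence \<psi>\<phi>: "comp C \<psi> \<phi> = idm C W" using \<psi>j split by simp
  have "comp C \<phi> \<psi> = plus C (comp C (comp C \<phi> i1) q1) (comp C (comp C \<phi> i2) q2)"
    unfolding \<psi>_def using comp_plus_left[OF comp_Hom[OF q1 i1] comp_Hom[OF q2 i2] \<phi>]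
      comp_assoc[OF q1 i1 \<phi>] comp_assoc[OF q2 i2 \<phi>] by simp
  hence \<phi>\<psi>: "comp C \<phi> \<psi> = idm C W'" using \<phi>i split' by simp
  show ?thesis unfolding iso_def using \<phi> \<psi> \<psi>\<phi> \<phi>\<psi> by blast
qed

lemma hom_nz_retract:
  assumes a: "a \<in> Hom C W W'" and b: "b \<in> Hom C W' W" and ba: "comp C b a = idm C W"
    and nz: "hom_nz C W i Z"
  shows "hom_nz C W' i Z"
proof -
  obtain Z' f where Z': "Z' \<in> shifts C i Z" and f: "f \<in> Hom C W Z'" and f_nz: "f \<noteq> zer C W Z'"
    using nz unfolding hom_nz_def by blast
  have "comp C f b \<noteq> zer C W' Z'"
  proof
    assume "comp C f b = zer C W' Z'"
    hence "comp C (comp C f b) a = zer C W Z'"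
      using comp_zer_left[OF a] Hom_Ob f by simp
    thus False using comp_assoc[OF a b f] ba comp_id_right[OF f] f_nz by simp
  qed
  thus ?thesis unfolding hom_nz_def using Z' comp_Hom[OF b f] by blast
qed

lemma addc_Ob: "W \<in> addc C Xs \<Longrightarrow> W \<in> Ob C"
  by (induction rule: addc.induct) (auto dest: zero_Ob biprod_Ob)

lemma addc_subset:
  assumes "Xs \<inter> Ob C \<subseteq> addc C Ys"
  shows "addc C Xs \<subseteq> addc C Ys"
proof
  fix W assume "W \<in> addc C Xs"
  thus "W \<in> addc C Ys"
  proof (induction rule: addc.induct)
    case (sum A B S i1 i2 p1 p2)
    show ?case by (rule addc.sum[OF sum.IH sum.hyps(3)])
  next
    case (summand S A B i1 i2 p1 p2)
    show ?case by (rule addc.summand[OF summand.IH summand.hyps(2)])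
  qed (use assms in \<open>auto intro: addc.zero\<close>)
qed

lemma addc_mono:
  assumes "Xs \<subseteq> Ys"
  shows "addc C Xs \<subseteq> addc C Ys"
  by (rule addc_subset) (use assms in \<open>auto intro: addc.base\<close>)

end

section \<open>Suspension and shifts\<close>

locale suspended_cat = additive_cat +
  assumes susp_equiv: "susp_equiv C"
begin

lemma Sig_Ob: "x \<in> Ob C \<Longrightarrow> Sig C x \<in> Ob C"
  using susp_equiv unfolding susp_equiv_def by meson

lemma SigA_Hom: "f \<in> Hom C x y \<Longrightarrow> SigA C f \<in> Hom C (Sig C x) (Sig C y)"
  using susp_equiv unfolding susp_equiv_def by meson

lemma SigA_id: "x \<in> Ob C \<Longrightarrow> SigA C (idm C x) = idm C (Sig C x)"
  using susp_equiv unfolding susp_equiv_def by meson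

lemma SigA_comp: "f \<in> Hom C x y \<Longrightarrow> g \<in> Hom C y z \<Longrightarrow>
    SigA C (comp C g f) = comp C (SigA C g) (SigA C f)"
  using susp_equiv unfolding susp_equiv_def by meson

lemma SigA_plus: "f \<in> Hom C x y \<Longrightarrow> g \<in> Hom C x y \<Longrightarrow>
    SigA C (plus C f g) = plus C (SigA C f) (SigA C g)"
  using susp_equiv unfolding susp_equiv_def by meson

lemma SigA_bij: "x \<in> Ob C \<Longrightarrow> y \<in> Ob C \<Longrightarrow>
    bij_betw (SigA C) (Hom C x y) (Hom C (Sig C x) (Sig C y))"
  using susp_equiv unfolding susp_equiv_def by meson

lemma Sig_essentially_surj: "y \<in> Ob C \<Longrightarrow> \<exists>x\<in>Ob C. iso C (Sig C x) y"
  using susp_equiv unfolding susp_equiv_def by meson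

abbreviation susp where "susp k \<equiv> Sig C ^^ k"
abbreviation suspA where "suspA k \<equiv> SigA C ^^ k"

lemma susp_susp: "susp a (susp b x) = susp (a + b) x"
  by (simp add: funpow_add)

lemma susp_Ob: "x \<in> Ob C \<Longrightarrow> susp k x \<in> Ob C"
  by (induction k) (auto simp: Sig_Ob)

lemma suspA_Hom: "f \<in> Hom C x y \<Longrightarrow> suspA k f \<in> Hom C (susp k x) (susp k y)"
  by (induction k) (auto simp: SigA_Hom)

lemma suspA_id: "x \<in> Ob C \<Longrightarrow> suspA k (idm C x) = idm C (susp k x)"
  by (induction k) (auto simp: SigA_id susp_Ob)

lemma suspA_comp: "f \<in> Hom C x y \<Longrightarrow> g \<in> Hom C y z \<Longrightarrow>
    suspA k (comp C g f) = comp C (suspA k g) (suspA k f)"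
proof (induction k)
  case (Suc k)
  thus ?case using SigA_comp[OF suspA_Hom[OF Suc.prems(1)] suspA_Hom[OF Suc.prems(2)]] by simp
qed simp

lemma suspA_plus: "f \<in> Hom C x y \<Longrightarrow> g \<in> Hom C x y \<Longrightarrow>
    suspA k (plus C f g) = plus C (suspA k f) (suspA k g)"
proof (induction k)
  case (Suc k)
  thus ?case using SigA_plus[OF suspA_Hom[OF Suc.prems(1)] suspA_Hom[OF Suc.prems(2)]] by simp
qed simp

lemma suspA_zer:
  assumes "x \<in> Ob C" and "y \<in> Ob C"
  shows "suspA k (zer C x y) = zer C (susp k x) (susp k y)"
proof -
  have z: "zer C x y \<in> Hom C x y" using zer_Hom assms .
  have "plus C (suspA k (zer C x y)) (suspA k (zer C x y)) = suspA k (zer C x y)"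
    using suspA_plus[OF z z] plus_zer_right[OF z] by simp
  thus ?thesis using eq_zer_if_plus_self suspA_Hom[OF z] by blast
qed

lemma suspA_bij:
  assumes "x \<in> Ob C" and "y \<in> Ob C"
  shows "bij_betw (suspA k) (Hom C x y) (Hom C (susp k x) (susp k y))"
proof (induction k)
  case (Suc k)
  have "bij_betw (SigA C) (Hom C (susp k x) (susp k y)) (Hom C (susp (Suc k) x) (susp (Suc k) y))"
    using SigA_bij susp_Ob assms by simp
  from bij_betw_trans[OF Suc.IH this] show ?case by (simp add: o_def)
qed (simp add: bij_betw_id[unfolded id_def])

lemma suspA_inj:
  assumes "f \<in> Hom C x y" and "g \<in> Hom C x y" and "suspA k f = suspA k g"
  shows "f = g"
proof -
  have "inj_on (suspA k) (Hom C x y)"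
    using bij_betw_imp_inj_on[OF suspA_bij] Hom_Ob assms(1) by blast
  thus ?thesis using inj_onD assms by metis
qed

lemma suspA_surj:
  assumes "h \<in> Hom C (susp k x) (susp k y)" and "x \<in> Ob C" and "y \<in> Ob C"
  shows "\<exists>f\<in>Hom C x y. suspA k f = h"
  using bij_betw_imp_surj_on[OF suspA_bij[OF assms(2,3)]] assms(1) by (metis imageE)

lemma suspA_eq_zer_iff:
  assumes f: "f \<in> Hom C x y"
  shows "suspA k f = zer C (susp k x) (susp k y) \<longleftrightarrow> f = zer C x y"
  using suspA_inj[OF f zer_Hom] suspA_zer Hom_Ob[OF f] by auto

lemma iso_susp:
  assumes "iso C x y"
  shows "iso C (susp k x) (susp k y)"
proof -
  obtain f g where f: "f \<in> Hom C x y" and g: "g \<in> Hom C y x"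
    and "comp C g f = idm C x" and "comp C f g = idm C y"
    using assms unfolding iso_def by blast
  hence "comp C (suspA k g) (suspA k f) = idm C (susp k x)"
    and "comp C (suspA k f) (suspA k g) = idm C (susp k y)"
    using suspA_comp[OF f g] suspA_comp[OF g f] suspA_id Hom_Ob[OF f] by simp_all
  thus ?thesis unfolding iso_def using suspA_Hom f g by blast
qed

lemma iso_susp_cancel:
  assumes iso: "iso C (susp k x) (susp k y)" and x: "x \<in> Ob C" and y: "y \<in> Ob C"
  shows "iso C x y"
proof -
  obtain f g where f: "f \<in> Hom C (susp k x) (susp k y)" and g: "g \<in> Hom C (susp k y) (susp k x)"
    and gf: "comp C g f = idm C (susp k x)" and fg: "comp C f g = idm C (susp k y)"
    using iso unfolding iso_def by blast
  obtain f' where f': "f' \<in> Hom C x y" "suspA k f' = f" using suspA_surj f x y by blast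
  obtain g' where g': "g' \<in> Hom C y x" "suspA k g' = g" using suspA_surj g x y by blast
  have "suspA k (comp C g' f') = suspA k (idm C x)"
    using suspA_comp[OF f'(1) g'(1)] suspA_id[OF x] f' g' gf by simp
  hence "comp C g' f' = idm C x"
    using suspA_inj comp_Hom[OF f'(1) g'(1)] id_Hom[OF x] by blast
  moreover have "suspA k (comp C f' g') = suspA k (idm C y)"
    using suspA_comp[OF g'(1) f'(1)] suspA_id[OF y] f' g' fg by simp
  hence "comp C f' g' = idm C y"
    using suspA_inj comp_Hom[OF g'(1) f'(1)] id_Hom[OF y] by blast
  ultimately show ?thesis unfolding iso_def using f' g' by blast
qed

lemma susp_essentially_surj: "y \<in> Ob C \<Longrightarrow> \<exists>x\<in>Ob C. iso C (susp k x) y"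
proof (induction k arbitrary: y)
  case 0
  thus ?case using iso_refl by auto
next
  case (Suc k)
  obtain x where x: "x \<in> Ob C" "iso C (Sig C x) y" using Sig_essentially_surj Suc.prems by blast
  obtain w where w: "w \<in> Ob C" "iso C (susp k w) x" using Suc.IH x(1) by blast
  have "iso C (Sig C (susp k w)) (Sig C x)" using iso_susp[OF w(2), of 1] by simp
  thus ?case using w x iso_trans by auto
qed

lemma biprod_susp:
  assumes "biprod C A B W i1 i2 p1 p2"
  shows "biprod C (susp k A) (susp k B) (susp k W) (suspA k i1) (suspA k i2) (suspA k p1) (suspA k p2)"
proof -
  from assms have A: "A \<in> Ob C" and B: "B \<in> Ob C" and W: "W \<in> Ob C"
    and i1: "i1 \<in> Hom C A W" and i2: "i2 \<in> Hom C B W"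
    and p1: "p1 \<in> Hom C W A" and p2: "p2 \<in> Hom C W B"
    and p1i1: "comp C p1 i1 = idm C A" and p2i2: "comp C p2 i2 = idm C B"
    and p2i1: "comp C p2 i1 = zer C A B" and p1i2: "comp C p1 i2 = zer C B A"
    and split: "plus C (comp C i1 p1) (comp C i2 p2) = idm C W"
    unfolding biprod_def by auto
  have "comp C (suspA k p1) (suspA k i1) = idm C (susp k A)"
    using suspA_comp[OF i1 p1] p1i1 suspA_id[OF A] by simp
  moreover have "comp C (suspA k p2) (suspA k i2) = idm C (susp k B)"
    using suspA_comp[OF i2 p2] p2i2 suspA_id[OF B] by simp
  moreover have "comp C (suspA k p2) (suspA k i1) = zer C (susp k A) (susp k B)"
    using suspA_comp[OF i1 p2] p2i1 suspA_zer[OF A B] by simp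
  moreover have "comp C (suspA k p1) (suspA k i2) = zer C (susp k B) (susp k A)"
    using suspA_comp[OF i2 p1] p1i2 suspA_zer[OF B A] by simp
  moreover have "plus C (comp C (suspA k i1) (suspA k p1)) (comp C (suspA k i2) (suspA k p2))
      = idm C (susp k W)"
    using suspA_plus[OF comp_Hom[OF p1 i1] comp_Hom[OF p2 i2]] suspA_comp[OF p1 i1]
      suspA_comp[OF p2 i2] split suspA_id[OF W] by simp
  ultimately show ?thesis
    unfolding biprod_def using A B W i1 i2 p1 p2 susp_Ob suspA_Hom by simp
qed

lemma mem_shifts_iff:
  assumes Z: "Z \<in> Ob C"
  shows "Z' \<in> shifts C i Z \<longleftrightarrow>
    Z' \<in> Ob C \<and> (\<exists>a b. i = int b - int a \<and> iso C (susp a Z') (susp b Z))"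
proof
  assume Z': "Z' \<in> shifts C i Z"
  show "Z' \<in> Ob C \<and> (\<exists>a b. i = int b - int a \<and> iso C (susp a Z') (susp b Z))"
  proof (cases "0 \<le> i")
    case True
    hence "iso C (susp 0 Z') (susp (nat i) Z)" using Z' unfolding shifts_def by simp
    thus ?thesis using True shifts_Ob[OF Z'] by (intro conjI exI[of _ 0] exI[of _ "nat i"]) auto
  next
    case False
    hence "iso C (susp (nat (- i)) Z') (susp 0 Z)" using Z' unfolding shifts_def by simp
    thus ?thesis using False shifts_Ob[OF Z'] by (intro conjI exI[of _ "nat (- i)"] exI[of _ 0]) auto
  qed
next
  assume "Z' \<in> Ob C \<and> (\<exists>a b. i = int b - int a \<and> iso C (susp a Z') (susp b Z))"
  then obtain a b where Z': "Z' \<in> Ob C" and i: "i = int b - int a"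
    and iso: "iso C (susp a Z') (susp b Z)"
    by blast
  show "Z' \<in> shifts C i Z"
  proof (cases "a \<le> b")
    case True
    have "iso C (susp a Z') (susp a (susp (b - a) Z))"
      using iso True susp_susp by simp
    hence "iso C Z' (susp (b - a) Z)"
      using iso_susp_cancel Z' susp_Ob Z by blast
    moreover have "nat i = b - a" using True i by simp
    ultimately show ?thesis unfolding shifts_def using True i Z' by auto
  next
    case False
    have "iso C (susp b (susp (a - b) Z')) (susp b Z)"
      using iso False susp_susp by simp
    hence "iso C (susp (a - b) Z') Z"
      using iso_susp_cancel Z' susp_Ob Z by blast
    moreover have "nat (- i) = a - b" using False i by simp
    ultimately show ?thesis unfolding shifts_def using False i Z' by auto
  qed
qed

lemma shifts_susp:
  assumes Z: "Z \<in> Ob C" and Z': "Z' \<in> shifts C i Z"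
  shows "susp k Z' \<in> shifts C (i + int k) Z"
proof -
  obtain a b where Z'_Ob: "Z' \<in> Ob C" and i: "i = int b - int a"
    and "iso C (susp a Z') (susp b Z)"
    using Z' mem_shifts_iff[OF Z] by blast
  hence "iso C (susp a (susp k Z')) (susp (b + k) Z)"
    using iso_susp[of "susp a Z'" "susp b Z" k] by (simp add: susp_susp ac_simps)
  moreover have "i + int k = int (b + k) - int a" using i by simp
  ultimately show ?thesis using mem_shifts_iff[OF Z] susp_Ob Z'_Ob by blast
qed

lemma shifts_desusp:
  assumes Z: "Z \<in> Ob C" and Z': "Z' \<in> shifts C i Z"
  shows "\<exists>Z''. Z'' \<in> shifts C (i - int k) Z \<and> iso C (susp k Z'') Z'"
proof -
  obtain a b where Z'_Ob: "Z' \<in> Ob C" and i: "i = int b - int a"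
    and iso: "iso C (susp a Z') (susp b Z)"
    using Z' mem_shifts_iff[OF Z] by blast
  obtain Z'' where Z'': "Z'' \<in> Ob C" and iso'': "iso C (susp k Z'') Z'"
    using susp_essentially_surj Z'_Ob by blast
  have "iso C (susp a (susp k Z'')) (susp a Z')" using iso_susp[OF iso''] .
  hence "iso C (susp (a + k) Z'') (susp b Z)" using iso_trans iso susp_susp by metis
  moreover have "i - int k = int b - int (a + k)" using i by simp
  ultimately have "Z'' \<in> shifts C (i - int k) Z" using mem_shifts_iff[OF Z] Z'' by blast
  thus ?thesis using iso'' by blast
qed

lemma hom_nz_susp:
  assumes Z: "Z \<in> Ob C" and nz: "hom_nz C W i Z"
  shows "hom_nz C (susp k W) (i + int k) Z"
proof -
  obtain Z' f where Z': "Z' \<in> shifts C i Z" and f: "f \<in> Hom C W Z'" and f_nz: "f \<noteq> zer C W Z'"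
    using nz unfolding hom_nz_def by blast
  have "suspA k f \<noteq> zer C (susp k W) (susp k Z')" using suspA_eq_zer_iff[OF f] f_nz by simp
  thus ?thesis unfolding hom_nz_def using shifts_susp[OF Z Z'] suspA_Hom[OF f] by blast
qed

lemma hom_nz_desusp:
  assumes Z: "Z \<in> Ob C" and W: "W \<in> Ob C" and nz: "hom_nz C (susp k W) i Z"
  shows "hom_nz C W (i - int k) Z"
proof -
  obtain Z' f where Z': "Z' \<in> shifts C i Z" and f: "f \<in> Hom C (susp k W) Z'"
    and f_nz: "f \<noteq> zer C (susp k W) Z'"
    using nz unfolding hom_nz_def by blast
  obtain Z'' where Z'': "Z'' \<in> shifts C (i - int k) Z" and "iso C (susp k Z'') Z'"
    using shifts_desusp[OF Z Z'] by blast
  then obtain a b where a: "a \<in> Hom C (susp k Z'') Z'" and b: "b \<in> Hom C Z' (susp k Z'')"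
    and ab: "comp C a b = idm C Z'"
    unfolding iso_def by blast
  obtain h where h: "h \<in> Hom C W Z''" and h_susp: "suspA k h = comp C b f"
    using suspA_surj[OF comp_Hom[OF f b] W shifts_Ob[OF Z'']] by blast
  have "h \<noteq> zer C W Z''"
  proof
    assume "h = zer C W Z''"
    hence "comp C a (comp C b f) = comp C a (zer C (susp k W) (susp k Z''))"
      using h_susp suspA_eq_zer_iff[OF h] by simp
    thus False
      using comp_assoc[OF f b a] ab comp_id_left[OF f] comp_zer_right[OF a] susp_Ob[OF W] f_nz
      by simp
  qed
  thus ?thesis unfolding hom_nz_def using Z'' h by blast
qed

lemma shifts_summand_in_addc:
  assumes b: "biprod C X B Y i1 i2 p1 p2" and Z: "Z \<in> shifts C i X"
  shows "Z \<in> addc C (shifts C i Y)"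
proof -
  have X: "X \<in> Ob C" and B: "B \<in> Ob C" and Y: "Y \<in> Ob C" using biprod_Ob[OF b] by auto
  obtain a b' where Z_Ob: "Z \<in> Ob C" and i: "i = int b' - int a"
    and isoZ: "iso C (susp a Z) (susp b' X)"
    using Z mem_shifts_iff[OF X] by blast
  obtain B' where B': "B' \<in> Ob C" and isoB: "iso C (susp a B') (susp b' B)"
    using susp_essentially_surj susp_Ob[OF B] by blast
  obtain W j1 j2 q1 q2 where bW: "biprod C Z B' W j1 j2 q1 q2"
    using ex_biprod[OF Z_Ob B'] by blast
  obtain k1 r1 where "biprod C (susp a Z) (susp b' B) (susp b' Y) k1 (suspA b' i2) r1 (suspA b' p2)"
    using biprod_replace_fst[OF biprod_susp[OF b] isoZ] by blast
  then obtain k2 r2 where "biprod C (susp a Z) (susp a B') (susp b' Y) k1 k2 r1 r2"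
    using biprod_replace_snd isoB by blast
  hence "iso C (susp a W) (susp b' Y)" using biprod_unique_iso biprod_susp[OF bW] by blast
  hence "W \<in> shifts C i Y" using mem_shifts_iff[OF Y] i biprod_Ob[OF bW] by blast
  from addc.summand[OF addc.base[OF this shifts_Ob[OF this]] bW] show ?thesis .
qed

end

section \<open>Objects without maps to any shift of Z\<close>

definition shift_orthogonal :: "('o, 'm) tcat \<Rightarrow> 'o \<Rightarrow> 'o \<Rightarrow> bool" where
  "shift_orthogonal C W Z \<longleftrightarrow> (\<forall>i. \<not> hom_nz C W i Z)"

lemma shift_orthogonal_iff:
  "shift_orthogonal C W Z \<longleftrightarrow> (\<forall>i. \<forall>Z'\<in>shifts C i Z. \<forall>f\<in>Hom C W Z'. f = zer C W Z')"
  unfolding shift_orthogonal_def hom_nz_def by blast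

context additive_cat
begin

lemma shift_orthogonal_retract:
  assumes "a \<in> Hom C W W'" and "b \<in> Hom C W' W" and "comp C b a = idm C W"
    and "shift_orthogonal C W' Z"
  shows "shift_orthogonal C W Z"
  using hom_nz_retract[OF assms(1-3)] assms(4) unfolding shift_orthogonal_def by blast

lemma shift_orthogonal_iso:
  assumes "iso C W W'" and "shift_orthogonal C W' Z"
  shows "shift_orthogonal C W Z"
proof -
  obtain a b where "a \<in> Hom C W W'" and "b \<in> Hom C W' W" and "comp C b a = idm C W"
    using assms(1) unfolding iso_def by blast
  thus ?thesis using shift_orthogonal_retract assms(2) by blast
qed

lemma shift_orthogonal_zero:
  assumes z: "is_zero C z"
  shows "shift_orthogonal C z Z"
  unfolding shift_orthogonal_iff
proof (intro allI ballI)
  fix i Z' f assume Z': "Z' \<in> shifts C i Z" and f: "f \<in> Hom C z Z'"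
  have "Hom C z Z' = {zer C z Z'}" using z shifts_Ob[OF Z'] unfolding is_zero_def by simp
  with f show "f = zer C z Z'" by simp
qed

lemma shift_orthogonal_biprod:
  assumes b: "biprod C A B W i1 i2 p1 p2"
    and A: "shift_orthogonal C A Z" and B: "shift_orthogonal C B Z"
  shows "shift_orthogonal C W Z"
  unfolding shift_orthogonal_iff
proof (intro allI ballI)
  fix i Z' f assume Z': "Z' \<in> shifts C i Z" and f: "f \<in> Hom C W Z'"
  from b have W: "W \<in> Ob C" and i1: "i1 \<in> Hom C A W" and i2: "i2 \<in> Hom C B W"
    and p1: "p1 \<in> Hom C W A" and p2: "p2 \<in> Hom C W B"
    and split: "plus C (comp C i1 p1) (comp C i2 p2) = idm C W"
    unfolding biprod_def by auto
  have Z'_Ob: "Z' \<in> Ob C" using shifts_Ob Z' .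
  have "comp C f i1 = zer C A Z'"
    using A Z' comp_Hom[OF i1 f] unfolding shift_orthogonal_iff by blast
  moreover have "comp C f i2 = zer C B Z'"
    using B Z' comp_Hom[OF i2 f] unfolding shift_orthogonal_iff by blast
  ultimately have "comp C f (comp C i1 p1) = zer C W Z'" and "comp C f (comp C i2 p2) = zer C W Z'"
    using comp_assoc[OF p1 i1 f] comp_assoc[OF p2 i2 f] comp_zer_left p1 p2 Z'_Ob by simp_all
  hence "comp C f (idm C W) = zer C W Z'"
    using comp_plus_left[OF comp_Hom[OF p1 i1] comp_Hom[OF p2 i2] f] split
      plus_zer_right zer_Hom[OF W Z'_Ob] by simp
  thus "f = zer C W Z'" using comp_id_right[OF f] by simp
qed

lemma shift_orthogonal_addc:
  assumes gen: "\<And>x. x \<in> Xs \<Longrightarrow> shift_orthogonal C x Z" and W: "W \<in> addc C Xs"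
  shows "shift_orthogonal C W Z"
  using W
proof (induction rule: addc.induct)
  case (zero z)
  thus ?case by (rule shift_orthogonal_zero)
next
  case (base x)
  from base(1) show ?case by (rule gen)
next
  case (sum A B S i1 i2 p1 p2)
  show ?case by (rule shift_orthogonal_biprod[OF sum.hyps(3) sum.IH])
next
  case (summand S A B i1 i2 p1 p2)
  have "i1 \<in> Hom C A S" and "p1 \<in> Hom C S A" and "comp C p1 i1 = idm C A"
    using summand.hyps(2) unfolding biprod_def by auto
  thus ?case by (rule shift_orthogonal_retract[OF _ _ _ summand.IH])
qed

lemma is_zero_if_shift_orthogonal_self:
  assumes Z: "Z \<in> Ob C" and orth: "shift_orthogonal C Z Z"
  shows "is_zero C Z"
proof -
  have "Z \<in> shifts C 0 Z" unfolding shifts_def using Z iso_refl by simp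
  hence id_zer: "idm C Z = zer C Z Z" using orth id_Hom[OF Z] unfolding shift_orthogonal_iff by blast
  have "f = zer C Z x" if f: "f \<in> Hom C Z x" for f x
    using comp_id_right[OF f] comp_zer_right[OF f Z] id_zer by simp
  moreover have "f = zer C x Z" if f: "f \<in> Hom C x Z" for f x
    using comp_id_left[OF f] comp_zer_left[OF f Z] id_zer by simp
  ultimately have "Hom C Z x = {zer C Z x} \<and> Hom C x Z = {zer C x Z}" if x: "x \<in> Ob C" for x
    using zer_Hom Z x by blast
  thus ?thesis unfolding is_zero_def using Z by blast
qed

end

context suspended_cat
begin

lemma shift_orthogonal_susp:
  "Z \<in> Ob C \<Longrightarrow> W \<in> Ob C \<Longrightarrow> shift_orthogonal C W Z \<Longrightarrow> shift_orthogonal C (susp k W) Z"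
  unfolding shift_orthogonal_def using hom_nz_desusp by blast

lemma shift_orthogonal_desusp:
  "Z \<in> Ob C \<Longrightarrow> shift_orthogonal C (susp k W) Z \<Longrightarrow> shift_orthogonal C W Z"
  unfolding shift_orthogonal_def using hom_nz_susp by blast

lemma shift_orthogonal_shifts:
  assumes Z: "Z \<in> Ob C" and X: "X \<in> Ob C" and orth: "shift_orthogonal C X Z"
    and W: "W \<in> shifts C i X"
  shows "shift_orthogonal C W Z"
proof (cases "0 \<le> i")
  case True
  hence "iso C W (susp (nat i) X)" using W unfolding shifts_def by simp
  thus ?thesis using shift_orthogonal_iso shift_orthogonal_susp Z X orth by blast
next
  case False
  hence "iso C (susp (nat (- i)) W) X" using W unfolding shifts_def by simp
  thus ?thesis using shift_orthogonal_iso shift_orthogonal_desusp Z orth by blast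
qed

end

section \<open>Triangulated categories and thick subcategories\<close>

locale triangulated_cat =
  fixes C :: "('o, 'm) tcat"
  assumes triangulated: "triangulated C"

sublocale triangulated_cat \<subseteq> suspended_cat
  using triangulated unfolding triangulated_def by unfold_locales simp_all

context triangulated_cat
begin

lemma tri_Hom: "(X, Y, Z, u, v, w) \<in> Tri C \<Longrightarrow>
    u \<in> Hom C X Y \<and> v \<in> Hom C Y Z \<and> w \<in> Hom C Z (Sig C X)"
  using triangulated unfolding triangulated_def is_triangle_def by fastforce

lemma tri_iso:
  "(X, Y, Z, u, v, w) \<in> Tri C \<Longrightarrow> is_triangle C (X', Y', Z', u', v', w') \<Longrightarrow>
   a \<in> Hom C X X' \<Longrightarrow> b \<in> Hom C Y Y' \<Longrightarrow> c \<in> Hom C Z Z' \<Longrightarrow>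
   is_iso_arr C a \<Longrightarrow> is_iso_arr C b \<Longrightarrow> is_iso_arr C c \<Longrightarrow>
   comp C b u = comp C u' a \<Longrightarrow> comp C c v = comp C v' b \<Longrightarrow>
   comp C (SigA C a) w = comp C w' c \<Longrightarrow> (X', Y', Z', u', v', w') \<in> Tri C"
  using triangulated unfolding triangulated_def by meson

lemma tri_id_zero: "X \<in> Ob C \<Longrightarrow> is_zero C z \<Longrightarrow>
    (X, X, z, idm C X, zer C X z, zer C z (Sig C X)) \<in> Tri C"
  using triangulated unfolding triangulated_def by meson

lemma tri_rotate: "(X, Y, Z, u, v, w) \<in> Tri C \<Longrightarrow> (Y, Z, Sig C X, v, w, neg C (SigA C u)) \<in> Tri C"
  using triangulated unfolding triangulated_def by meson

lemma tri_complete: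
  "(X, Y, Z, u, v, w) \<in> Tri C \<Longrightarrow> (X', Y', Z', u', v', w') \<in> Tri C \<Longrightarrow>
   a \<in> Hom C X X' \<Longrightarrow> b \<in> Hom C Y Y' \<Longrightarrow> comp C b u = comp C u' a \<Longrightarrow>
   \<exists>c\<in>Hom C Z Z'. comp C c v = comp C v' b \<and> comp C (SigA C a) w = comp C w' c"
  using triangulated unfolding triangulated_def by meson

text \<open>Rotating B \<rightarrow> B \<rightarrow> 0 \<rightarrow> \<Sigma>B twice gives 0 \<rightarrow> \<Sigma>B \<rightarrow> \<Sigma>B with middle map -id;
  for f : \<Sigma>B \<cong> A, the triangle isomorphism (id, f, -f) turns it into the required one.\<close>
lemma tri_zero_id:
  assumes A: "A \<in> Ob C" and z: "is_zero C z"
  shows "(z, A, A, zer C z A, idm C A, zer C A (Sig C z)) \<in> Tri C"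
proof -
  have z_Ob: "z \<in> Ob C" using zero_Ob z .
  obtain B f g where B: "B \<in> Ob C" and f: "f \<in> Hom C (Sig C B) A" and g: "g \<in> Hom C A (Sig C B)"
    and gf: "comp C g f = idm C (Sig C B)" and fg: "comp C f g = idm C A"
    using Sig_essentially_surj[OF A] unfolding iso_def by blast
  have SB: "Sig C B \<in> Ob C" and Sz: "Sig C z \<in> Ob C" using Sig_Ob B z_Ob by auto
  have "(B, z, Sig C B, zer C B z, zer C z (Sig C B), neg C (idm C (Sig C B))) \<in> Tri C"
    using tri_rotate[OF tri_id_zero[OF B z]] SigA_id[OF B] by simp
  from tri_rotate[OF this]
  have T: "(z, Sig C B, Sig C B, zer C z (Sig C B), neg C (idm C (Sig C B)),
      zer C (Sig C B) (Sig C z)) \<in> Tri C"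
    using suspA_zer[OF B z_Ob, of 1] neg_zer[OF SB Sz] by simp
  have nf: "neg C f \<in> Hom C (Sig C B) A" using neg_Hom f .
  have iso_nf: "is_iso_arr C (neg C f)" using is_iso_arr_neg f g gf fg .
  have iso_f: "is_iso_arr C f" using is_iso_arrI f g gf fg by blast
  have iso_id: "is_iso_arr C (idm C z)"
    using is_iso_arrI id_Hom[OF z_Ob] comp_id_right[OF id_Hom[OF z_Ob]] by blast
  have "is_triangle C (z, A, A, zer C z A, idm C A, zer C A (Sig C z))"
    unfolding is_triangle_def using zer_Hom z_Ob A Sz id_Hom by simp
  moreover have "comp C f (zer C z (Sig C B)) = comp C (zer C z A) (idm C z)"
    using comp_zer_right[OF f z_Ob] comp_id_right[OF zer_Hom[OF z_Ob A]] by simp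
  moreover have "comp C (neg C f) (neg C (idm C (Sig C B))) = comp C (idm C A) f"
    using comp_neg_right[OF nf id_Hom[OF SB]] comp_id_right[OF nf] neg_neg[OF f] comp_id_left[OF f]
    by simp
  moreover have "comp C (SigA C (idm C z)) (zer C (Sig C B) (Sig C z))
      = comp C (zer C A (Sig C z)) (neg C f)"
    using SigA_id[OF z_Ob] comp_id_left[OF zer_Hom[OF SB Sz]] comp_zer_left[OF nf Sz] by simp
  ultimately show ?thesis
    using tri_iso[OF T _ id_Hom[OF z_Ob] f nf iso_id iso_f iso_nf] by blast
qed

lemma factor_through_connecting_map:
  assumes T: "(U, V, W, \<phi>, v, w) \<in> Tri C" and g: "g \<in> Hom C W Z" and gv: "comp C g v = zer C V Z"
  shows "\<exists>h\<in>Hom C (Sig C U) Z. comp C h w = g"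
proof -
  obtain z where z: "is_zero C z" using ex_zero by blast
  have z_Ob: "z \<in> Ob C" using zero_Ob z .
  have v: "v \<in> Hom C V W" using tri_Hom[OF T] by simp
  have V: "V \<in> Ob C" and Z: "Z \<in> Ob C" using Hom_Ob v g by auto
  have "comp C g v = comp C (zer C z Z) (zer C V z)"
    using gv comp_zer_left[OF zer_Hom[OF V z_Ob] Z] by simp
  then obtain h where "h \<in> Hom C (Sig C U) Z" and "comp C h w = comp C (idm C Z) g"
    using tri_complete[OF tri_rotate[OF T] tri_zero_id[OF Z z] zer_Hom[OF V z_Ob] g] by blast
  thus ?thesis using comp_id_left[OF g] by auto
qed

lemma thick_Ob: "W \<in> thick C X k \<Longrightarrow> W \<in> Ob C"
  by (cases "(C, X, k)" rule: thick.cases) (auto intro: addc_Ob)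

lemma zero_in_thick: "is_zero C z \<Longrightarrow> z \<in> thick C X k"
  by (cases "(C, X, k)" rule: thick.cases) (auto intro: addc.zero)

lemma thick_Suc_subset: "thick C X k \<subseteq> thick C X (Suc k)"
proof (cases k)
  case 0
  thus ?thesis using addc_mono[of "{}"] by simp
next
  case (Suc m)
  obtain z where z: "is_zero C z" using ex_zero by blast
  have "W \<in> thick C X (Suc (Suc m))" if W: "W \<in> thick C X (Suc m)" for W
  proof -
    have W_Ob: "W \<in> Ob C" using thick_Ob W .
    have "W \<in> cones C z W"
      unfolding cones_def using tri_zero_id[OF W_Ob z] zer_Hom[OF zero_Ob[OF z] W_Ob] by blast
    hence "W \<in> {W. \<exists>U V. U \<in> thick C X (Suc 0) \<and> V \<in> thick C X (Suc m) \<and> W \<in> cones C U V}"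
      using W zero_in_thick[OF z] by blast
    thus ?thesis using W_Ob by (simp add: addc.base)
  qed
  thus ?thesis using Suc by blast
qed

lemma thick_mono: "a \<le> b \<Longrightarrow> thick C X a \<subseteq> thick C X b"
  using lift_Suc_mono_le[of "thick C X"] thick_Suc_subset by blast

lemma thick_subset_if_thick1_subset:
  assumes one: "thick C X (Suc 0) \<subseteq> thick C Y (Suc 0)"
  shows "thick C X k \<subseteq> thick C Y k"
proof -
  have "thick C X (Suc m) \<subseteq> thick C Y (Suc m)" for m
  proof (induction m)
    case 0
    show ?case using one .
  next
    case (Suc m)
    have "{W. \<exists>U V. U \<in> thick C X (Suc 0) \<and> V \<in> thick C X (Suc m) \<and> W \<in> cones C U V}
        \<subseteq> {W. \<exists>U V. U \<in> thick C Y (Suc 0) \<and> V \<in> thick C Y (Suc m) \<and> W \<in> cones C U V}"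
      using one Suc.IH by blast
    thus ?case using addc_mono by simp
  qed
  thus ?thesis by (cases k) auto
qed

lemma thick_subset_of_summand:
  assumes "biprod C X B Y i1 i2 p1 p2"
  shows "thick C X k \<subseteq> thick C Y k"
proof (rule thick_subset_if_thick1_subset)
  have "Z \<in> addc C (\<Union>i. shifts C i Y)" if "Z \<in> shifts C i X" for Z i
    using addc_mono[of "shifts C i Y" "\<Union>i. shifts C i Y"] shifts_summand_in_addc[OF assms that]
    by blast
  hence "(\<Union>i. shifts C i X) \<inter> Ob C \<subseteq> addc C (\<Union>i. shifts C i Y)" by blast
  thus "thick C X (Suc 0) \<subseteq> thick C Y (Suc 0)" using addc_subset by simp
qed

lemma shift_orthogonal_cone:
  assumes T: "(U, V, W, \<phi>, v, w) \<in> Tri C"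
    and U: "shift_orthogonal C (Sig C U) Z" and V: "shift_orthogonal C V Z"
  shows "shift_orthogonal C W Z"
  unfolding shift_orthogonal_iff
proof (intro allI ballI)
  fix i Z' f assume Z': "Z' \<in> shifts C i Z" and f: "f \<in> Hom C W Z'"
  have v: "v \<in> Hom C V W" and w: "w \<in> Hom C W (Sig C U)" using tri_Hom[OF T] by auto
  have "comp C f v = zer C V Z'" using V Z' comp_Hom[OF v f] unfolding shift_orthogonal_iff by blast
  then obtain h where h: "h \<in> Hom C (Sig C U) Z'" and hw: "comp C h w = f"
    using factor_through_connecting_map[OF T f] by blast
  have "h = zer C (Sig C U) Z'" using U Z' h unfolding shift_orthogonal_iff by blast
  thus "f = zer C W Z'" using hw comp_zer_left[OF w shifts_Ob[OF Z']] by simp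
qed

lemma shift_orthogonal_thick:
  assumes Z: "Z \<in> Ob C" and X: "X \<in> Ob C" and orth: "shift_orthogonal C X Z"
    and W: "W \<in> thick C X k"
  shows "shift_orthogonal C W Z"
proof -
  have one: "shift_orthogonal C U Z" if U: "U \<in> thick C X (Suc 0)" for U
  proof (rule shift_orthogonal_addc)
    show "U \<in> addc C (\<Union>i. shifts C i X)" using U by simp
  qed (auto intro: shift_orthogonal_shifts[OF Z X orth])
  have step: "shift_orthogonal C V Z" if "V \<in> thick C X (Suc m)" for V m
    using that
  proof (induction m arbitrary: V)
    case 0
    thus ?case using one by simp
  next
    case (Suc m)
    have cone: "shift_orthogonal C W Z"
      if W: "W \<in> cones C U V" and U: "U \<in> thick C X (Suc 0)" and V: "V \<in> thick C X (Suc m)"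
      for U V W
    proof -
      obtain \<phi> v w where T: "(U, V, W, \<phi>, v, w) \<in> Tri C" using W unfolding cones_def by blast
      have "shift_orthogonal C (Sig C U) Z"
        using shift_orthogonal_susp[OF Z thick_Ob[OF U] one[OF U], of 1] by simp
      thus ?thesis using shift_orthogonal_cone[OF T _ Suc.IH[OF V]] by blast
    qed
    show ?case
    proof (rule shift_orthogonal_addc)
      show "V \<in> addc C {W. \<exists>U V. U \<in> thick C X (Suc 0) \<and> V \<in> thick C X (Suc m) \<and> W \<in> cones C U V}"
        using Suc.prems by simp
    qed (use cone in blast)
  qed
  show ?thesis
  proof (cases k)
    case 0
    thus ?thesis using W shift_orthogonal_addc[of "{}"] by simp
  next
    case (Suc m)
    thus ?thesis using W step by blast
  qed
qed

lemma hle_forces_shift_less: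
  assumes b: "biprod C X (susp n X) Y i1 i2 p1 p2" and Z: "Z \<in> Ob C"
    and nz: "hom_nz C X i Z" and hle: "hle C Y Z p"
  shows "n < p"
proof -
  from b have "i1 \<in> Hom C X Y" "p1 \<in> Hom C Y X" "comp C p1 i1 = idm C X"
    and "i2 \<in> Hom C (susp n X) Y" "p2 \<in> Hom C Y (susp n X)" "comp C p2 i2 = idm C (susp n X)"
    unfolding biprod_def by auto
  hence "hom_nz C Y i Z" and "hom_nz C Y (i + int n) Z"
    using hom_nz_retract nz hom_nz_susp[OF Z nz] by blast+
  thus ?thesis using hle unfolding hle_def by fastforce
qed

lemma homset_subset_thick:
  assumes X: "X \<in> Ob C" and gen: "thick C X (Suc n) = Ob C"
    and b: "biprod C X (susp n X) Y i1 i2 p1 p2"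
  shows "homset C Y p \<subseteq> thick C Y p"
proof
  fix Z assume "Z \<in> homset C Y p"
  hence Z: "Z \<in> Ob C" and hle: "hle C Y Z p" unfolding homset_def by auto
  have Z_thick: "Z \<in> thick C X (Suc n)" using gen Z by simp
  show "Z \<in> thick C Y p"
  proof (cases "shift_orthogonal C X Z")
    case True
    hence "is_zero C Z"
      using is_zero_if_shift_orthogonal_self shift_orthogonal_thick Z X Z_thick by blast
    thus ?thesis by (rule zero_in_thick)
  next
    case False
    then obtain i where "hom_nz C X i Z" unfolding shift_orthogonal_def by blast
    hence "Suc n \<le> p" using hle_forces_shift_less[OF b Z _ hle] by fastforce
    thus ?thesis using Z_thick thick_subset_of_summand[OF b] thick_mono by blast
  qed
qed

end

theorem mainTheorem4:
  fixes C :: "('o, 'm) tcat" and X Y :: 'o and n :: nat and i1 i2 p1 p2 :: 'm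
  assumes "triangulated C"
    and "X \<in> Ob C"
    and "thick C X (n + 1) = Ob C"
    and "biprod C X ((Sig C ^^ n) X) Y i1 i2 p1 p2"
  shows "(\<forall>p. homset C Y p \<subseteq> thick C Y p) \<and>
         ((\<forall>Z\<in>Ob C. homologically_finite C Z) \<longrightarrow> finitistic_generator C Y)"
proof -
  interpret triangulated_cat C by (rule triangulated_cat.intro) (fact assms(1))
  have "\<forall>p. homset C Y p \<subseteq> thick C Y p"
    using homset_subset_thick assms(2-4) by simp
  moreover have "Y \<in> Ob C" using biprod_Ob[OF assms(4)] by blast
  ultimately show ?thesis unfolding finitistic_generator_def by blast
qed

end
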